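(* Let $\mathcal{C}$ be any category. Let $l : K \to L$, $r : K \to R$, monomorphisms $t_L : L \rightarrowtail L'$, $t_K : K \rightarrowtail K'$, and $l' : K' \to L'$ be such that $L \xleftarrow{l} K \xrightarrow{t_K} K'$ is a pullback of $L \xrightarrow{t_L} L' \xleftarrow{l'} K'$. Let $G_L$ be an object, $\alpha : G_L \to L'$ and $m : L \to G_L$ morphisms such that $L \xleftarrow{1_L} L \xrightarrow{m} G_L$ is a pullback of $L \xrightarrow{t_L} L' \xleftarrow{\alpha} G_L$, and let $G_L \xleftarrow{g_L} G_K \xrightarrow{u'} K'$ be a pullback of $G_L \xrightarrow{\alpha} L' \xleftarrow{l'} K'$. Then there is a unique morphism $v : K \to G_K$ such that $t_K = u' \circ v$. *)

theory Defs
  imports Main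
begin

text \<open>A (possibly large-free, set-based) category: objects of type 'o, arrows of type 'a.
  Comp g f is the composite g after f.\<close>

record ('o, 'a) category_data =
  Ob   :: "'o set"
  Ar   :: "'a set"
  Dom  :: "'a \<Rightarrow> 'o"
  Cod  :: "'a \<Rightarrow> 'o"
  Id   :: "'o \<Rightarrow> 'a"
  Comp :: "'a \<Rightarrow> 'a \<Rightarrow> 'a"

definition hom :: "('o, 'a) category_data \<Rightarrow> 'o \<Rightarrow> 'o \<Rightarrow> 'a set" where
  "hom C X Y = {f \<in> Ar C. Dom C f = X \<and> Cod C f = Y}"

definition category :: "('o, 'a) category_data \<Rightarrow> bool" where
  "category C \<longleftrightarrow>
     (\<forall>f \<in> Ar C. Dom C f \<in> Ob C \<and> Cod C f \<in> Ob C) \<and>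
     (\<forall>X \<in> Ob C. Id C X \<in> hom C X X) \<and>
     (\<forall>f \<in> Ar C. \<forall>g \<in> Ar C. Cod C f = Dom C g \<longrightarrow>
         Comp C g f \<in> hom C (Dom C f) (Cod C g)) \<and>
     (\<forall>f \<in> Ar C. Comp C f (Id C (Dom C f)) = f \<and> Comp C (Id C (Cod C f)) f = f) \<and>
     (\<forall>f \<in> Ar C. \<forall>g \<in> Ar C. \<forall>h \<in> Ar C. Cod C f = Dom C g \<longrightarrow> Cod C g = Dom C h \<longrightarrow>
         Comp C h (Comp C g f) = Comp C (Comp C h g) f)"

definition mono_arr :: "('o, 'a) category_data \<Rightarrow> 'a \<Rightarrow> bool" where
  "mono_arr C f \<longleftrightarrow> f \<in> Ar C \<and>
     (\<forall>g \<in> Ar C. \<forall>h \<in> Ar C. Cod C g = Dom C f \<longrightarrow> Cod C h = Dom C f \<longrightarrow>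
        Dom C g = Dom C h \<longrightarrow> Comp C f g = Comp C f h \<longrightarrow> g = h)"

definition is_pullback :: "('o, 'a) category_data \<Rightarrow> 'a \<Rightarrow> 'a \<Rightarrow> 'a \<Rightarrow> 'a \<Rightarrow> bool" where
  "is_pullback C p1 p2 f g \<longleftrightarrow>
     p1 \<in> Ar C \<and> p2 \<in> Ar C \<and> f \<in> Ar C \<and> g \<in> Ar C \<and>
     Dom C p1 = Dom C p2 \<and> Cod C p1 = Dom C f \<and> Cod C p2 = Dom C g \<and> Cod C f = Cod C g \<and>
     Comp C f p1 = Comp C g p2 \<and>
     (\<forall>q1 \<in> Ar C. \<forall>q2 \<in> Ar C.
        Dom C q1 = Dom C q2 \<and> Cod C q1 = Dom C f \<and> Cod C q2 = Dom C g \<and>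
        Comp C f q1 = Comp C g q2 \<longrightarrow>
        (\<exists>!u. u \<in> hom C (Dom C q1) (Dom C p1) \<and> Comp C p1 u = q1 \<and> Comp C p2 u = q2))"

end

theory Submission
  imports Defs
begin

text \<open>The composite m l : K \<rightarrow> GL satisfies \<alpha> m l = tL l = l' tK, so the pullback GK yields
  v with gL v = m l and u' v = tK. Conversely, any v with u' v = tK satisfies
  \<alpha> (gL v) = l' tK = tL l; since L is the pullback of tL and \<alpha> with projections 1 and m,
  this forces gL v = m l, and uniqueness of the mediating arrow into GK gives uniqueness of v.\<close>

lemma pullback_commutes:
  assumes "is_pullback C p1 p2 f g"
  shows "Comp C f p1 = Comp C g p2"
  using assms unfolding is_pullback_def by blast

lemma pullback_lift:
  assumes "is_pullback C p1 p2 f g"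
    and "p1 \<in> hom C P A" and "p2 \<in> hom C P B"
    and "q1 \<in> hom C X A" and "q2 \<in> hom C X B"
    and "Comp C f q1 = Comp C g q2"
  shows "\<exists>!u. u \<in> hom C X P \<and> Comp C p1 u = q1 \<and> Comp C p2 u = q2"
proof -
  have universal: "\<forall>q1 \<in> Ar C. \<forall>q2 \<in> Ar C.
      Dom C q1 = Dom C q2 \<and> Cod C q1 = Dom C f \<and> Cod C q2 = Dom C g \<and>
      Comp C f q1 = Comp C g q2 \<longrightarrow>
      (\<exists>!u. u \<in> hom C (Dom C q1) (Dom C p1) \<and> Comp C p1 u = q1 \<and> Comp C p2 u = q2)"
    using assms(1) unfolding is_pullback_def by blast
  have ar: "q1 \<in> Ar C" "q2 \<in> Ar C" and dom: "Dom C q1 = X" "Dom C p1 = P"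
    and span: "Dom C q1 = Dom C q2 \<and> Cod C q1 = Dom C f \<and> Cod C q2 = Dom C g \<and>
      Comp C f q1 = Comp C g q2"
    using assms unfolding is_pullback_def hom_def by auto
  from universal[rule_format, OF ar span] show ?thesis
    unfolding dom .
qed

locale cat =
  fixes C :: "('o, 'a) category_data"
  assumes category: "category C"
begin

lemma comp_in_hom:
  assumes "f \<in> hom C X Y" and "g \<in> hom C Y Z"
  shows "Comp C g f \<in> hom C X Z"
  using category assms unfolding category_def hom_def by fastforce

lemma comp_assoc:
  assumes "f \<in> hom C X Y" and "g \<in> hom C Y Z" and "h \<in> hom C Z W"
  shows "Comp C h (Comp C g f) = Comp C (Comp C h g) f"
  using category assms unfolding category_def hom_def by auto

lemma comp_id_left:
  assumes "f \<in> hom C X Y"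
  shows "Comp C (Id C Y) f = f"
  using category assms unfolding category_def hom_def by auto

lemma comp_id_right:
  assumes "f \<in> hom C X Y"
  shows "Comp C f (Id C X) = f"
  using category assms unfolding category_def hom_def by auto

lemma pullback_of_identity_factors:
  assumes "is_pullback C (Id C L) m f g"
    and "L \<in> Ob C" and "m \<in> hom C L G" and "f \<in> hom C L Z" and "g \<in> hom C G Z"
    and "k \<in> hom C X L" and "q \<in> hom C X G"
    and "Comp C g q = Comp C f k"
  shows "q = Comp C m k"
proof -
  have "Id C L \<in> hom C L L"
    using category assms(2) unfolding category_def by blast
  with assms obtain x where x: "x \<in> hom C X L" "Comp C (Id C L) x = k" "Comp C m x = q"
    using pullback_lift[of C "Id C L" m f g L L G k X q] by auto
  then have "x = k"
    using comp_id_left by simp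
  with x show ?thesis
    by simp
qed

lemma ex1_lift_through_pullback_of_identity:
  assumes pb: "is_pullback C gL u' \<alpha> l'"
    and "gL \<in> hom C GK GL" and "u' \<in> hom C GK K'"
    and "\<alpha> \<in> hom C GL L'" and "l' \<in> hom C K' L'"
    and pb_id: "is_pullback C (Id C L) m tL \<alpha>"
    and "L \<in> Ob C" and "m \<in> hom C L GL" and "tL \<in> hom C L L'"
    and "l \<in> hom C K L" and "w \<in> hom C K K'"
    and square: "Comp C l' w = Comp C tL l"
  shows "\<exists>!v. v \<in> hom C K GK \<and> Comp C u' v = w"
proof -
  have "Comp C \<alpha> m = Comp C tL (Id C L)"
    using pullback_commutes[OF pb_id] by simp
  also have "\<dots> = tL"
    using comp_id_right[OF assms(9)] .
  finally have \<alpha>m: "Comp C \<alpha> m = tL" .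
  have "Comp C \<alpha> (Comp C m l) = Comp C l' w"
    using comp_assoc[OF assms(10,8,4)] \<alpha>m square by simp
  then have lift: "\<exists>!v. v \<in> hom C K GK \<and> Comp C gL v = Comp C m l \<and> Comp C u' v = w"
    using pullback_lift[OF pb assms(2,3) comp_in_hom[OF assms(10,8)] assms(11)] by simp
  have factors: "Comp C gL v = Comp C m l" if v: "v \<in> hom C K GK" "Comp C u' v = w" for v
  proof (rule pullback_of_identity_factors[OF pb_id assms(7-9,4,10)])
    show "Comp C gL v \<in> hom C K GL"
      using comp_in_hom[OF v(1) assms(2)] .
    have "Comp C \<alpha> (Comp C gL v) = Comp C (Comp C \<alpha> gL) v"
      using comp_assoc[OF v(1) assms(2,4)] .
    also have "\<dots> = Comp C (Comp C l' u') v"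
      using pullback_commutes[OF pb] by simp
    also have "\<dots> = Comp C tL l"
      using comp_assoc[OF v(1) assms(3,5)] v(2) square by simp
    finally show "Comp C \<alpha> (Comp C gL v) = Comp C tL l" .
  qed
  then have "v \<in> hom C K GK \<and> Comp C u' v = w \<longleftrightarrow>
      v \<in> hom C K GK \<and> Comp C gL v = Comp C m l \<and> Comp C u' v = w" for v
    by blast
  with lift show ?thesis
    by simp
qed

end

theorem lemma2:
  fixes C :: "('o, 'a) category_data"
    and K L R L' K' GL GK :: 'o
    and l r tL tK l' \<alpha> m gL u' :: 'a
  assumes "category C"
    and "K \<in> Ob C" "L \<in> Ob C" "R \<in> Ob C" "L' \<in> Ob C" "K' \<in> Ob C" "GL \<in> Ob C" "GK \<in> Ob C"
    and "l \<in> hom C K L" and "r \<in> hom C K R"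
    and "tL \<in> hom C L L'" and "mono_arr C tL"
    and "tK \<in> hom C K K'" and "mono_arr C tK"
    and "l' \<in> hom C K' L'"
    and "is_pullback C l tK tL l'"
    and "\<alpha> \<in> hom C GL L'" and "m \<in> hom C L GL"
    and "is_pullback C (Id C L) m tL \<alpha>"
    and "gL \<in> hom C GK GL" and "u' \<in> hom C GK K'"
    and "is_pullback C gL u' \<alpha> l'"
  shows "\<exists>!v. v \<in> hom C K GK \<and> tK = Comp C u' v"
proof -
  interpret cat C
    by (rule cat.intro) (rule assms(1))
  have "Comp C l' tK = Comp C tL l"
    using pullback_commutes[OF assms(16)] by simp
  from ex1_lift_through_pullback_of_identity[OF assms(22,20,21,17,15,19,3,18,11,9,13) this]
  show ?thesis
    by (metis (no_types, lifting))
qed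

end
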